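(* Let $\mu\in\mathbb{R}$ and let $\mathbf{A}\in\mathbb{R}^{m\times n}$ be a random matrix with independent rows. Suppose that for each $1\leq i\leq n$ the $i$-th column of $\mathbf{A}$ can be written as $\mathbf{a}^{col}_i=\mathbf{a}^{col}_{0,i}+\mu\mathbf{1}$, where $\mathbf{1}\in\mathbb{R}^m$ is the all-ones vector and $\mathbf{a}^{col}_{0,i}$ is a zero-mean random vector with independent components which is $1$-subgaussian, i.e. $\mathbb{E}[\exp(t\langle\mathbf{a}^{col}_{0,i},\mathbf{v}\rangle)]\leq\exp(t^2)$ for all $\mathbf{v}\in\mathbb{R}^m$ with $\|\mathbf{v}\|_2\leq 1$ and all $t\in\mathbb{R}$. Then $\mathbf{A}\in\mathcal{M}^+$ with probability at least $1-2n\exp\left(-\frac{\mu^2 m}{16}\right)$.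
   Context: $\mathcal{M}^+$ denotes the set of matrices $\mathbf{M}\in\mathbb{R}^{m\times n}$ for which there exists $\mathbf{t}\in\mathbb{R}^m$ with $\mathbf{M}^T\mathbf{t}>\mathbf{0}$ entrywise (i.e. the row span of $\mathbf{M}$ intersects the open positive orthant). *)

theory Defs
  imports "HOL-Probability.Probability"
begin

definition M_plus :: "real^'n^'m \<Rightarrow> bool" where
  "M_plus M \<longleftrightarrow> (\<exists>t :: real^'m. \<forall>i. (transpose M *v t) $ i > 0)"

end

theory Submission
  imports Defs
begin

(* Test membership in M+ with t = s 1, where s = +-1 is the sign of mu. The i-th entry of A^T t
   is |mu| m - <a0_i, -s 1>, so A can only fail to be in M+ if <a0_i, -s 1> >= |mu| m for some
   column i. The moment generating function bound in the unit direction -s 1 / sqrt m and the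
   Chernoff inequality bound each of these events by exp (-mu^2 m / 4), and a union bound over the
   n columns gives the claim. *)

lemma M_plus_if_column_inner_pos:
  fixes X :: "real^'n^'m"
  assumes "\<And>i. 0 < column i X \<bullet> w"
  shows "M_plus X"
proof -
  have "(transpose X *v w) $ i = column i X \<bullet> w" for i
    by (simp add: matrix_vector_mult_def transpose_def column_def inner_vec_def mult.commute)
  then show ?thesis
    unfolding M_plus_def using assms by metis
qed

lemma M_plus_if_shifted_columns:
  fixes X :: "real^'n^'m" and s :: real
  assumes "\<And>i. column i X = a i + \<mu> *\<^sub>R 1"
    and "s * \<mu> = \<bar>\<mu>\<bar>"
    and "\<And>i. a i \<bullet> (- s *\<^sub>R 1) < \<bar>\<mu>\<bar> * CARD('m)"
  shows "M_plus X"
proof (rule M_plus_if_column_inner_pos)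
  fix i
  have "(1 :: real^'m) \<bullet> 1 = CARD('m)"
    by (simp add: inner_vec_def)
  then have "column i X \<bullet> (s *\<^sub>R 1) = \<bar>\<mu>\<bar> * CARD('m) - a i \<bullet> (- s *\<^sub>R 1)"
    using assms(1,2) by (simp add: inner_add_left algebra_simps)
  then show "0 < column i X \<bullet> (s *\<^sub>R 1)"
    using assms(3)[of i] by simp
qed

lemma open_M_plus: "open {X :: real^'n^'m. M_plus X}"
proof -
  have "{X :: real^'n^'m. M_plus X} = (\<Union>t. \<Inter>i. {X. 0 < (transpose X *v t) $ i})"
    unfolding M_plus_def by auto
  moreover have "open {X :: real^'n^'m. 0 < (transpose X *v t) $ i}" for t i
  proof -
    have "(transpose X *v t) $ i = (\<Sum>j\<in>UNIV. X $ j $ i * t $ j)" for X :: "real^'n^'m"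
      by (simp add: matrix_vector_mult_def transpose_def)
    then show ?thesis
      by (simp only:) (intro open_Collect_less continuous_intros)
  qed
  ultimately show ?thesis
    by (auto intro!: open_INT open_UN)
qed

lemma (in prob_space) subgaussian_tail:
  fixes X :: "'a \<Rightarrow> real"
  assumes X: "X \<in> borel_measurable M"
    and mgf: "\<And>t. (\<integral>\<^sup>+ \<omega>. ennreal (exp (t * X \<omega>)) \<partial>M) \<le> ennreal (exp (t\<^sup>2))"
    and "0 \<le> a"
  shows "prob {\<omega> \<in> space M. a \<le> X \<omega>} \<le> exp (- (a\<^sup>2 / 4))"
proof (cases "a = 0")
  case True
  then show ?thesis by simp
next
  case False
  with \<open>0 \<le> a\<close> have "0 < a / 2" by simp
  have "emeasure M {\<omega> \<in> space M. a \<le> X \<omega>}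
      \<le> ennreal (exp (- (a / 2) * a)) * (\<integral>\<^sup>+ \<omega>. ennreal (exp (a / 2 * X \<omega>)) * indicator (space M) \<omega> \<partial>M)"
    using X by (intro Chernoff_ineq_nn_integral_ge \<open>0 < a / 2\<close>) auto
  also have "(\<integral>\<^sup>+ \<omega>. ennreal (exp (a / 2 * X \<omega>)) * indicator (space M) \<omega> \<partial>M)
      = (\<integral>\<^sup>+ \<omega>. ennreal (exp (a / 2 * X \<omega>)) \<partial>M)"
    by (intro nn_integral_cong) simp
  also have "ennreal (exp (- (a / 2) * a)) * \<dots> \<le> ennreal (exp (- (a / 2) * a)) * ennreal (exp ((a / 2)\<^sup>2))"
    by (intro mult_left_mono mgf) simp
  also have "\<dots> = ennreal (exp (- (a\<^sup>2 / 4)))"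
    by (simp add: ennreal_mult' [symmetric] exp_add [symmetric] power2_eq_square field_simps)
  finally show ?thesis
    by (simp add: emeasure_eq_measure)
qed

lemma (in prob_space) subgaussian_inner_tail:
  fixes X :: "'a \<Rightarrow> 'b::{real_inner, second_countable_topology}"
  assumes X: "X \<in> borel_measurable M"
    and mgf: "\<And>v t. norm v \<le> 1 \<Longrightarrow> (\<integral>\<^sup>+ \<omega>. ennreal (exp (t * (X \<omega> \<bullet> v))) \<partial>M) \<le> ennreal (exp (t\<^sup>2))"
    and "0 \<le> a"
  shows "prob {\<omega> \<in> space M. a \<le> X \<omega> \<bullet> w} \<le> exp (- (a\<^sup>2 / (4 * (norm w)\<^sup>2)))"
proof (cases "w = 0")
  case True
  \<comment> \<open>the bound is then exp 0 = 1, as division by zero yields 0\<close>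
  then show ?thesis by simp
next
  case False
  define u where "u = w /\<^sub>R norm w"
  have "norm u = 1"
    using False by (simp add: u_def)
  have "{\<omega> \<in> space M. a \<le> X \<omega> \<bullet> w} = {\<omega> \<in> space M. a / norm w \<le> X \<omega> \<bullet> u}"
    using False by (auto simp: u_def field_simps)
  also have "prob \<dots> \<le> exp (- ((a / norm w)\<^sup>2 / 4))"
    using X \<open>0 \<le> a\<close> \<open>norm u = 1\<close> by (intro subgaussian_tail mgf) auto
  finally show ?thesis
    by (simp add: power_divide mult.commute)
qed

lemma (in prob_space) subgaussian_sum_tail:
  fixes X :: "'a \<Rightarrow> real^'m" and s c :: real
  assumes "X \<in> borel_measurable M"
    and "\<And>v t. norm v \<le> 1 \<Longrightarrow> (\<integral>\<^sup>+ \<omega>. ennreal (exp (t * (X \<omega> \<bullet> v))) \<partial>M) \<le> ennreal (exp (t\<^sup>2))"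
    and "\<bar>s\<bar> = 1" "0 \<le> c"
  shows "prob {\<omega> \<in> space M. c * CARD('m) \<le> X \<omega> \<bullet> (s *\<^sub>R 1)} \<le> exp (- (c\<^sup>2 * CARD('m) / 4))"
proof -
  have "(norm (s *\<^sub>R (1 :: real^'m)))\<^sup>2 = CARD('m)"
    using abs_mult_self_eq[of s] \<open>\<bar>s\<bar> = 1\<close> unfolding power2_norm_eq_inner by (simp add: inner_vec_def)
  moreover have "prob {\<omega> \<in> space M. c * CARD('m) \<le> X \<omega> \<bullet> (s *\<^sub>R 1)}
      \<le> exp (- ((c * CARD('m))\<^sup>2 / (4 * (norm (s *\<^sub>R (1 :: real^'m)))\<^sup>2)))"
    using assms by (intro subgaussian_inner_tail) auto
  ultimately show ?thesis
    by (simp add: power2_eq_square mult.assoc)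
qed

lemma (in prob_space) prob_ge_one_minus_union_bound:
  fixes \<epsilon> :: real
  assumes "finite I"
    and E: "\<And>i. i \<in> I \<Longrightarrow> E i \<in> events" "\<And>i. i \<in> I \<Longrightarrow> prob (E i) \<le> \<epsilon>"
    and S: "space M - (\<Union>i\<in>I. E i) \<subseteq> S" "S \<in> events"
  shows "1 - card I * \<epsilon> \<le> prob S"
proof -
  have "1 - card I * \<epsilon> \<le> 1 - (\<Sum>i\<in>I. prob (E i))"
    using sum_mono[of I "\<lambda>i. prob (E i)" "\<lambda>_. \<epsilon>"] E by simp
  also have "\<dots> \<le> 1 - prob (\<Union>i\<in>I. E i)"
    using finite_measure_subadditive_finite[OF \<open>finite I\<close>] E by auto
  also have "\<dots> = prob (space M - (\<Union>i\<in>I. E i))"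
    using E \<open>finite I\<close> by (subst prob_compl) auto
  also have "\<dots> \<le> prob S"
    using S by (intro finite_measure_mono) auto
  finally show ?thesis .
qed

theorem theorem5:
  fixes M :: "'w measure"
    and A :: "'w \<Rightarrow> real^'n^'m"
    and a0 :: "'n \<Rightarrow> 'w \<Rightarrow> real^'m"
    and \<mu> :: real
  assumes "prob_space M"
    and A_rv: "A \<in> borel_measurable M"
    and rows_indep: "prob_space.indep_vars M (\<lambda>_. borel) (\<lambda>j \<omega>. A \<omega> $ j) UNIV"
    and a0_rv: "\<And>i. a0 i \<in> borel_measurable M"
    and col_decomp: "\<And>i \<omega>. \<omega> \<in> space M \<Longrightarrow> column i (A \<omega>) = a0 i \<omega> + \<mu> *\<^sub>R (1 :: real^'m)"
    and comp_indep: "\<And>i. prob_space.indep_vars M (\<lambda>_. borel) (\<lambda>j \<omega>. a0 i \<omega> $ j) UNIV"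
    and zero_mean: "\<And>i j. integrable M (\<lambda>\<omega>. a0 i \<omega> $ j) \<and> prob_space.expectation M (\<lambda>\<omega>. a0 i \<omega> $ j) = 0"
    and subgauss: "\<And>i (v :: real^'m) (t :: real). norm v \<le> 1 \<Longrightarrow>
        (\<integral>\<^sup>+ \<omega>. ennreal (exp (t * (a0 i \<omega> \<bullet> v))) \<partial>M) \<le> ennreal (exp (t\<^sup>2))"
  shows "measure M {\<omega> \<in> space M. M_plus (A \<omega>)}
           \<ge> 1 - 2 * real CARD('n) * exp (- (\<mu>\<^sup>2 * real CARD('m) / 16))"
proof -
  interpret prob_space M by fact
  define s :: real where "s = (if \<mu> < 0 then -1 else 1)"
  define E where "E i = {\<omega> \<in> space M. \<bar>\<mu>\<bar> * CARD('m) \<le> a0 i \<omega> \<bullet> (- s *\<^sub>R 1)}" for i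
  have E_events: "E i \<in> events" for i
    unfolding E_def using a0_rv[of i] by measurable
  have E_prob: "prob (E i) \<le> 2 * exp (- (\<mu>\<^sup>2 * CARD('m) / 16))" for i
  proof -
    have "prob (E i) \<le> exp (- (\<bar>\<mu>\<bar>\<^sup>2 * CARD('m) / 4))"
      unfolding E_def using subgaussian_sum_tail[OF a0_rv[of i] subgauss, of "- s" "\<bar>\<mu>\<bar>"] by (simp add: s_def)
    also have "\<dots> \<le> exp (- (\<mu>\<^sup>2 * CARD('m) / 16))"
      by simp
    also have "\<dots> \<le> 2 * exp (- (\<mu>\<^sup>2 * CARD('m) / 16))"
      by simp
    finally show ?thesis .
  qed
  have "s * \<mu> = \<bar>\<mu>\<bar>"
    by (simp add: s_def)
  then have "M_plus (A \<omega>)" if "\<omega> \<in> space M" "\<omega> \<notin> (\<Union>i. E i)" for \<omega>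
    using that col_decomp by (intro M_plus_if_shifted_columns) (auto simp: E_def not_le)
  then have "space M - (\<Union>i. E i) \<subseteq> {\<omega> \<in> space M. M_plus (A \<omega>)}"
    by blast
  moreover have "{\<omega> \<in> space M. M_plus (A \<omega>)} \<in> events"
    using measurable_sets[OF A_rv borel_open[OF open_M_plus]] by (simp add: vimage_def Int_def conj_commute)
  ultimately show ?thesis
    using prob_ge_one_minus_union_bound[of UNIV E, OF _ E_events E_prob] by (simp add: mult_ac)
qed

end
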